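(* Let $\mathscr{L}$ be the rooted transition system with a single state $a$, transition $a\to a$, and initial state $a$, and let $\mathscr{C}$ be the rooted transition system with states $\{x,y\}$, transitions $x\to y$, $y\to x$, and initial state $x$. Then $R=\{(a,x),(a,y)\}$ is a relational bisimulation between $\mathscr{L}$ and $\mathscr{C}$ containing the pair of initial states, but there is no functional bisimulation between $\mathscr{L}$ and $\mathscr{C}$. In particular, functional bisimulation is strictly stronger than relational bisimulation.
   Context: A rooted transition system consists of a set of states, a binary transition relation $\to$, and an initial state. A simulation $f:\mathscr{M}\to\mathscr{N}$ is a function on states with $s\to s'$ implying $f(s)\to f(s')$ and preserving initial states. A relational bisimulation between $\mathscr{M}$ and $\mathscr{N}$ is a relation $R$ between their states satisfying: if $(s,t)\in R$ and $s\to s'$ then there is $t'$ with $t\to t'$ and $(s',t')\in R$; and if $(s,t)\in R$ and $t\to t'$ then there is $s'$ with $s\to s'$ and $(s',t')\in R$. Two states $s,t$ of a system are path-equivalent, $s\sim t$, if for all states $u$: $s\to^*u\iff t\to^*u$ and $u\to^*s\iff u\to^*t$ ($\to^*$ the reflexive-transitive closure). A functional bisimulation between $\mathscr{M}$ and $\mathscr{N}$ is a pair of simulations $f:\mathscr{M}\to\mathscr{N}$, $g:\mathscr{N}\to\mathscr{M}$ with $gf(s)\sim s$ for all states $s$ of $\mathscr{M}$ and $fg(t)\sim t$ for all states $t$ of $\mathscr{N}$. Every functional bisimulation yields a relational bisimulation. *)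

theory Defs
  imports Main
begin

record 's rts =
  states :: "'s set"
  trans :: "'s \<Rightarrow> 's \<Rightarrow> bool"
  init :: 's

definition wf_rts :: "'s rts \<Rightarrow> bool" where
  "wf_rts M \<longleftrightarrow> init M \<in> states M \<and>
     (\<forall>s t. trans M s t \<longrightarrow> s \<in> states M \<and> t \<in> states M)"

definition simulation :: "'s rts \<Rightarrow> 't rts \<Rightarrow> ('s \<Rightarrow> 't) \<Rightarrow> bool" where
  "simulation M N f \<longleftrightarrow>
     (\<forall>s\<in>states M. f s \<in> states N) \<and>
     (\<forall>s\<in>states M. \<forall>s'\<in>states M. trans M s s' \<longrightarrow> trans N (f s) (f s')) \<and>
     f (init M) = init N"

definition rel_bisim :: "'s rts \<Rightarrow> 't rts \<Rightarrow> ('s \<times> 't) set \<Rightarrow> bool" where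
  "rel_bisim M N R \<longleftrightarrow>
     R \<subseteq> states M \<times> states N \<and>
     (\<forall>(s,t)\<in>R. \<forall>s'. trans M s s' \<longrightarrow> (\<exists>t'. trans N t t' \<and> (s',t') \<in> R)) \<and>
     (\<forall>(s,t)\<in>R. \<forall>t'. trans N t t' \<longrightarrow> (\<exists>s'. trans M s s' \<and> (s',t') \<in> R))"

abbreviation reach :: "'s rts \<Rightarrow> 's \<Rightarrow> 's \<Rightarrow> bool" where
  "reach M \<equiv> (trans M)\<^sup>*\<^sup>*"

definition path_equiv :: "'s rts \<Rightarrow> 's \<Rightarrow> 's \<Rightarrow> bool" where
  "path_equiv M s t \<longleftrightarrow>
     (\<forall>u\<in>states M. (reach M s u \<longleftrightarrow> reach M t u) \<and> (reach M u s \<longleftrightarrow> reach M u t))"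

definition fun_bisim :: "'s rts \<Rightarrow> 't rts \<Rightarrow> ('s \<Rightarrow> 't) \<Rightarrow> ('t \<Rightarrow> 's) \<Rightarrow> bool" where
  "fun_bisim M N f g \<longleftrightarrow>
     simulation M N f \<and> simulation N M g \<and>
     (\<forall>s\<in>states M. path_equiv M (g (f s)) s) \<and>
     (\<forall>t\<in>states N. path_equiv N (f (g t)) t)"

datatype Lstate = a
datatype Cstate = x | y

definition L_sys :: "Lstate rts" where
  "L_sys = \<lparr>states = {a}, trans = (\<lambda>s t. s = a \<and> t = a), init = a\<rparr>"

definition C_sys :: "Cstate rts" where
  "C_sys = \<lparr>states = {x, y},
            trans = (\<lambda>s t. (s = x \<and> t = y) \<or> (s = y \<and> t = x)), init = x\<rparr>"

end

theory Submission
  imports Defs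
begin

(* A simulation maps a self-loop to a self-loop. The one-state loop L has one at its root and the
   two-cycle C has none, so there is not even a simulation from L to C, let alone a functional
   bisimulation; relationally, on the other hand, every state of either system has a successor
   and R relates every state of L to every state of C. *)

lemma simulation_self_loop:
  assumes "simulation M N f" and "s \<in> states M" and "trans M s s"
  shows "trans N (f s) (f s)"
  using assms unfolding simulation_def by blast

lemma no_simulation_into_loop_free:
  assumes "init M \<in> states M" and "trans M (init M) (init M)"
    and "\<And>t. \<not> trans N t t"
  shows "\<not> simulation M N f"
  using simulation_self_loop[of M N f "init M"] assms by blast

lemma fun_bisim_simulation:
  assumes "fun_bisim M N f g"
  shows "simulation M N f"
  using assms unfolding fun_bisim_def by blast

lemma L_sys_init_loop: "init L_sys \<in> states L_sys" "trans L_sys (init L_sys) (init L_sys)"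
  by (simp_all add: L_sys_def)

lemma C_sys_loop_free: "\<not> trans C_sys t t"
  by (simp add: C_sys_def)

lemma L_C_rel_bisim: "rel_bisim L_sys C_sys {(a, x), (a, y)}"
  unfolding rel_bisim_def L_sys_def C_sys_def by auto

theorem mainTheorem3:
  shows "rel_bisim L_sys C_sys {(a, x), (a, y)}
       \<and> (init L_sys, init C_sys) \<in> {(a, x), (a, y)}
       \<and> \<not> (\<exists>f g. fun_bisim L_sys C_sys f g)"
proof (intro conjI)
  show "rel_bisim L_sys C_sys {(a, x), (a, y)}"
    by (rule L_C_rel_bisim)
  show "(init L_sys, init C_sys) \<in> {(a, x), (a, y)}"
    by (simp add: L_sys_def C_sys_def)
  have "\<not> simulation L_sys C_sys f" for f
    using L_sys_init_loop C_sys_loop_free by (rule no_simulation_into_loop_free)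
  then show "\<not> (\<exists>f g. fun_bisim L_sys C_sys f g)"
    using fun_bisim_simulation by blast
qed

end
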